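(* Let $G=(V,E)$ be a finite simple undirected graph, $G_0:=G$, and let $W_1,\dots,W_r$ be distinct subsets of $V$ such that for every $t\in\{1,\dots,r\}$, $W_t$ is a clique of $G_{t-1}$ with $|W_t|\ge2$ and $G_t:=G_{t-1}\mid W_t$. Let $F_0:=STAB(G)$ and $F_t:=\{x\in STAB(G)\mid x_{W_j}=1,\ j=1,\dots,t\}$. Then for every $t\in\{1,\dots,r\}$, the inequality $x_{W_t}\le1$ is valid for $F_{t-1}$.
   Context: For a graph $G=(V,E)$, $\mathcal S(G)\subseteq\{0,1\}^V$ is the set of characteristic vectors of stable sets of $G$, and $STAB(G)=\mathrm{conv}\,\mathcal S(G)$. For $W\subseteq V$ and $x\in\mathbb R^V$, $x_W=\sum_{v\in W}x_v$. The clique projection of a clique $W$ ($|W|\ge2$) of a graph $H=(V,E_H)$ is $H\mid W=(V,E_H\cup\{uv\notin E_H\mid u\ne v,\ W\subseteq N_H(u)\cup N_H(v)\})$, where $N_H(u)$ is the neighborhood of $u$ in $H$. *)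

theory Defs
  imports "HOL-Analysis.Analysis"
begin

text \<open>A finite simple undirected graph on the vertex set UNIV of a finite type 'v is
  given by its edge set E, a set of 2-element vertex sets.\<close>

definition simple_graph :: "'v set set \<Rightarrow> bool" where
  "simple_graph E \<longleftrightarrow> (\<forall>e\<in>E. card e = 2)"

definition nbhd :: "'v set set \<Rightarrow> 'v \<Rightarrow> 'v set" where
  "nbhd E u = {v. {u, v} \<in> E}"

definition is_stable :: "'v set set \<Rightarrow> 'v set \<Rightarrow> bool" where
  "is_stable E S \<longleftrightarrow> (\<forall>u\<in>S. \<forall>v\<in>S. {u, v} \<notin> E)"

definition is_clique :: "'v set set \<Rightarrow> 'v set \<Rightarrow> bool" where
  "is_clique E W \<longleftrightarrow> (\<forall>u\<in>W. \<forall>v\<in>W. u \<noteq> v \<longrightarrow> {u, v} \<in> E)"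

definition char_vec :: "'v set \<Rightarrow> real ^ 'v" where
  "char_vec S = (\<chi> v. if v \<in> S then 1 else 0)"

definition stab_vecs :: "('v::finite) set set \<Rightarrow> (real ^ 'v) set" where
  "stab_vecs E = {char_vec S | S. is_stable E S}"

definition STAB :: "('v::finite) set set \<Rightarrow> (real ^ 'v) set" where
  "STAB E = convex hull (stab_vecs E)"

definition xsum :: "real ^ 'v \<Rightarrow> 'v set \<Rightarrow> real" where
  "xsum x W = (\<Sum>v\<in>W. x $ v)"

definition clique_proj :: "'v set set \<Rightarrow> 'v set \<Rightarrow> 'v set set" where
  "clique_proj E W = E \<union> {{u, v} | u v. {u, v} \<notin> E \<and> u \<noteq> v \<and> W \<subseteq> nbhd E u \<union> nbhd E v}"

end

theory Submission
  imports Defs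
begin

text \<open>Write x \<in> STAB(G) as a convex combination of characteristic vectors of stable sets of G.
  Every stable set S meets a clique of G in at most one vertex, so x_W \<le> 1 for every clique W,
  and x_W = 1 forces every S of positive weight to meet W in exactly one vertex w. Such an S stays
  stable in G | W: a new edge uv with u, v \<in> S would need w to be adjacent to u or to v. By
  induction along W_1, \<dots>, W_{t-1}, every stable set of positive weight in a point of F_{t-1} is
  stable in G_{t-1}, whose clique W_t it meets at most once.\<close>

lemma card_clique_inter_stable_le_1:
  fixes W :: "'v::finite set"
  assumes "is_clique E W" "is_stable E S"
  shows "card (W \<inter> S) \<le> 1"
  using assms card_le_Suc0_iff_eq[of "W \<inter> S"] unfolding is_clique_def is_stable_def by auto

lemma is_stable_clique_proj:
  assumes stable: "is_stable E S" and meets_once: "card (W \<inter> S) = 1"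
  shows "is_stable (clique_proj E W) S"
  unfolding is_stable_def
proof (intro ballI notI)
  fix a b assume "a \<in> S" "b \<in> S" and ab: "{a, b} \<in> clique_proj E W"
  obtain w where w: "W \<inter> S = {w}" using meets_once card_1_singletonE by blast
  have "{a, b} \<notin> E" using stable \<open>a \<in> S\<close> \<open>b \<in> S\<close> unfolding is_stable_def by blast
  with ab have "W \<subseteq> nbhd E a \<union> nbhd E b"
    unfolding clique_proj_def by (auto simp: doubleton_eq_iff)
  with w have "{a, w} \<in> E \<or> {b, w} \<in> E" unfolding nbhd_def by auto
  with stable \<open>a \<in> S\<close> \<open>b \<in> S\<close> w show False unfolding is_stable_def by blast
qed

lemma convex_sum_le_1:
  fixes u f :: "'a \<Rightarrow> real"
  assumes "\<forall>a\<in>A. 0 \<le> u a" "sum u A = 1" "\<forall>a\<in>A. 0 < u a \<longrightarrow> f a \<le> 1"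
  shows "(\<Sum>a\<in>A. u a * f a) \<le> 1"
proof -
  have "(\<Sum>a\<in>A. u a * f a) \<le> sum u A"
  proof (rule sum_mono)
    fix a assume "a \<in> A"
    with assms(1,3) show "u a * f a \<le> u a"
      by (cases "u a > 0") (auto simp: mult_le_cancel_left1)
  qed
  with assms(2) show ?thesis by simp
qed

lemma convex_sum_eq_1_imp_eq_1:
  fixes u f :: "'a \<Rightarrow> real"
  assumes "finite A" "\<forall>a\<in>A. 0 \<le> u a" "sum u A = 1" "\<forall>a\<in>A. 0 < u a \<longrightarrow> f a \<le> 1"
    and tight: "(\<Sum>a\<in>A. u a * f a) = 1"
  shows "\<forall>a\<in>A. 0 < u a \<longrightarrow> f a = 1"
proof (intro ballI impI)
  fix a assume "a \<in> A" "0 < u a"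
  have slack_nonneg: "0 \<le> u b - u b * f b" if "b \<in> A" for b
    using assms(2,4) that by (cases "u b > 0") (auto simp: mult_le_cancel_left1)
  have "(\<Sum>b\<in>A. u b - u b * f b) = 0"
    using assms(3) tight by (simp add: sum_subtractf)
  then have "u a - u a * f a = 0"
    using sum_nonneg_eq_0_iff[OF \<open>finite A\<close> slack_nonneg] \<open>a \<in> A\<close> by simp
  then have "u a * (1 - f a) = 0" by (simp add: algebra_simps)
  with \<open>0 < u a\<close> show "f a = 1" by simp
qed

lemma char_vec_nth: "char_vec S $ v = (if v \<in> S then 1 else 0)"
  unfolding char_vec_def by simp

lemma inj_char_vec: "inj char_vec"
proof (rule injI)
  fix S T :: "'v::finite set" assume eq: "char_vec S = char_vec T"
  show "S = T"
  proof (rule set_eqI)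
    fix v
    have "char_vec S $ v = char_vec T $ v" using eq by simp
    then show "v \<in> S \<longleftrightarrow> v \<in> T" unfolding char_vec_nth by (simp split: if_splits)
  qed
qed

lemma xsum_char_vec:
  fixes S :: "'v::finite set"
  shows "xsum (char_vec S) W = real (card (W \<inter> S))"
  unfolding xsum_def char_vec_nth by (simp add: sum.If_cases)

lemma STAB_convex_combination:
  fixes x :: "real ^ 'v::finite"
  assumes "x \<in> STAB E"
  obtains u where "\<forall>S\<in>{S. is_stable E S}. 0 \<le> u S" "sum u {S. is_stable E S} = 1"
    "\<And>A. xsum x A = (\<Sum>S | is_stable E S. u S * real (card (A \<inter> S)))"
proof -
  let ?\<S> = "{S. is_stable E S}"
  have vecs: "stab_vecs E = char_vec ` ?\<S>" unfolding stab_vecs_def by auto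
  have inj: "inj_on char_vec ?\<S>" using inj_char_vec by (rule inj_on_subset) simp
  obtain c where c: "\<forall>y\<in>stab_vecs E. 0 \<le> c y" "sum c (stab_vecs E) = 1"
    "(\<Sum>y\<in>stab_vecs E. c y *\<^sub>R y) = x"
    using assms convex_hull_finite[of "stab_vecs E"] unfolding STAB_def vecs by auto
  let ?u = "c \<circ> char_vec"
  have x: "x = (\<Sum>S\<in>?\<S>. ?u S *\<^sub>R char_vec S)"
    using c(3) unfolding vecs sum.reindex[OF inj] by simp
  have "xsum x A = (\<Sum>S\<in>?\<S>. ?u S * real (card (A \<inter> S)))" for A
  proof -
    have "xsum x A = (\<Sum>S\<in>?\<S>. ?u S * xsum (char_vec S) A)"
      unfolding x xsum_def by (simp add: sum.swap[of _ A] sum_distrib_left)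
    then show ?thesis by (simp add: xsum_char_vec)
  qed
  moreover have "\<forall>S\<in>?\<S>. 0 \<le> ?u S" "sum ?u ?\<S> = 1"
    using c(1,2) unfolding vecs sum.reindex[OF inj] by auto
  ultimately show thesis using that by blast
qed

lemma clique_weight_le_1:
  fixes \<S> :: "'v::finite set set"
  assumes "\<forall>S\<in>\<S>. 0 \<le> u S" "sum u \<S> = 1"
    and stable: "\<forall>S\<in>\<S>. 0 < u S \<longrightarrow> is_stable H S" and "is_clique H W"
  shows "(\<Sum>S\<in>\<S>. u S * real (card (W \<inter> S))) \<le> 1"
proof (rule convex_sum_le_1[OF assms(1,2)])
  show "\<forall>S\<in>\<S>. 0 < u S \<longrightarrow> real (card (W \<inter> S)) \<le> 1"
    using stable card_clique_inter_stable_le_1[OF \<open>is_clique H W\<close>] by fastforce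
qed

lemma tight_clique_preserves_stable_support:
  fixes \<S> :: "'v::finite set set"
  assumes "finite \<S>" "\<forall>S\<in>\<S>. 0 \<le> u S" "sum u \<S> = 1"
    and stable: "\<forall>S\<in>\<S>. 0 < u S \<longrightarrow> is_stable H S" and "is_clique H W"
    and tight: "(\<Sum>S\<in>\<S>. u S * real (card (W \<inter> S))) = 1"
  shows "\<forall>S\<in>\<S>. 0 < u S \<longrightarrow> is_stable (clique_proj H W) S"
proof -
  have "\<forall>S\<in>\<S>. 0 < u S \<longrightarrow> real (card (W \<inter> S)) \<le> 1"
    using stable card_clique_inter_stable_le_1[OF \<open>is_clique H W\<close>] by fastforce
  from convex_sum_eq_1_imp_eq_1[OF assms(1-3) this tight]
  have "\<forall>S\<in>\<S>. 0 < u S \<longrightarrow> card (W \<inter> S) = 1" by simp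
  with stable show ?thesis by (simp add: is_stable_clique_proj)
qed

theorem corollary1:
  fixes E :: "('v::finite) set set"
    and G :: "nat \<Rightarrow> 'v set set"
    and W :: "nat \<Rightarrow> 'v set"
    and r :: nat
  assumes "simple_graph E"
    and "G 0 = E"
    and "inj_on W {1..r}"
    and "\<And>t. t \<in> {1..r} \<Longrightarrow> is_clique (G (t - 1)) (W t)"
    and "\<And>t. t \<in> {1..r} \<Longrightarrow> card (W t) \<ge> 2"
    and "\<And>t. t \<in> {1..r} \<Longrightarrow> G t = clique_proj (G (t - 1)) (W t)"
  shows "\<forall>t\<in>{1..r}. \<forall>x\<in>{y \<in> STAB E. \<forall>j\<in>{1..t - 1}. xsum y (W j) = 1}.
           xsum x (W t) \<le> 1"
proof (intro ballI)
  fix t x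
  assume t: "t \<in> {1..r}" and x: "x \<in> {y \<in> STAB E. \<forall>j\<in>{1..t - 1}. xsum y (W j) = 1}"
  let ?\<S> = "{S. is_stable E S}"
  obtain u where u: "\<forall>S\<in>?\<S>. 0 \<le> u S" "sum u ?\<S> = 1"
    and xsum_x: "\<And>A. xsum x A = (\<Sum>S\<in>?\<S>. u S * real (card (A \<inter> S)))"
    using x STAB_convex_combination by blast
  have support_stable: "\<forall>S\<in>?\<S>. 0 < u S \<longrightarrow> is_stable (G j) S" if "j \<le> t - 1" for j
    using that
  proof (induction j)
    case 0
    then show ?case using assms(2) by simp
  next
    case (Suc j)
    then have j: "Suc j \<in> {1..r}" "xsum x (W (Suc j)) = 1" using t x by auto
    with Suc show ?case
      using tight_clique_preserves_stable_support[OF _ u _ assms(4)[OF j(1)]] assms(6)[OF j(1)]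
      by (simp add: xsum_x)
  qed
  then show "xsum x (W t) \<le> 1"
    unfolding xsum_x using clique_weight_le_1[OF u _ assms(4)[OF t]] by simp
qed

end
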